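(* Let $\alpha\colon\mathbb{R}\to\mathbb{R}$ be continuous, $\eta(w)=w+\frac{\alpha(w)}{2}$, and $S_\alpha=\bigcup_{w\in\mathbb{R}}[(-1,-\alpha(w),\eta(w)),(1,\alpha(w),\eta(w))]$. Then $S_\alpha$ is a graphical strip over $K$ if and only if $\frac{\alpha(w_2)-\alpha(w_1)}{w_2-w_1}\ge-2$ for all $w_1<w_2$ and $\eta(\mathbb{R})=\mathbb{R}$.
   Context: $\mathbb{H}$ is $\mathbb{R}^3$ with product $(x,y,z)\cdot(x',y',z')=(x+x',y+y',z+z'+\frac{xy'-yx'}{2})$; $Y^t=(0,t,0)$. A horizontal line is a set $\{p\cdot tv:t\in\mathbb{R}\}$, $v=(a,b,0)\neq0$; a ruled surface is a union of horizontal segments (rulings) with endpoints in its boundary. $V_0=\{(x,0,z)\}$; for $D\subset V_0$ and $f\colon D\to\mathbb{R}$, $\Gamma_f=\{u\cdot Y^{f(u)}:u\in D\}$. A graphical strip over $D$ is an intrinsic graph $\Gamma_f$ of a continuous $f\colon D\to\mathbb{R}$ which is ruled and all of whose rulings intersect the $z$-axis. $K=\{(x,0,z):-1\le x\le1\}$. $[p_1,p_2]$ is the line segment from $p_1$ to $p_2$. *)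

theory Defs
  imports "HOL-Analysis.Analysis"
begin

type_synonym heis = "real \<times> real \<times> real"

fun hmul :: "heis \<Rightarrow> heis \<Rightarrow> heis" where
  "hmul (x, y, z) (x', y', z') = (x + x', y + y', z + z' + (x * y' - y * x') / 2)"

definition Yt :: "real \<Rightarrow> heis" where
  "Yt t = (0, t, 0)"

definition V0 :: "heis set" where
  "V0 = {(x, 0, z) | x z. True}"

definition z_axis :: "heis set" where
  "z_axis = {(0, 0, z) | z. True}"

definition intrinsic_graph :: "heis set \<Rightarrow> (heis \<Rightarrow> real) \<Rightarrow> heis set" where
  "intrinsic_graph D f = {hmul u (Yt (f u)) | u. u \<in> D}"

text \<open>q lies on the horizontal line through p in a horizontal direction v = (a,b,0) \<noteq> 0,
  i.e. q = p \<cdot> v; horizontal lines are Euclidean lines, so the segment is the Euclidean one.\<close>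
definition horizontal_pair :: "heis \<Rightarrow> heis \<Rightarrow> bool" where
  "horizontal_pair p q \<longleftrightarrow> (\<exists>a b. (a, b) \<noteq> (0, 0) \<and> q = hmul p (a, b, 0))"

definition horizontal_segment :: "heis set \<Rightarrow> bool" where
  "horizontal_segment \<sigma> \<longleftrightarrow> (\<exists>p q. horizontal_pair p q \<and> \<sigma> = closed_segment p q)"

definition graph_boundary :: "heis set \<Rightarrow> (heis \<Rightarrow> real) \<Rightarrow> heis set" where
  "graph_boundary D f = intrinsic_graph ((subtopology euclidean V0) frontier_of D) f"

definition graphical_strip :: "heis set \<Rightarrow> heis set \<Rightarrow> bool" where
  "graphical_strip D S \<longleftrightarrow> D \<subseteq> V0 \<and>
     (\<exists>f. continuous_on D f \<and> S = intrinsic_graph D f \<and>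
        (\<exists>R. \<Union>R = S \<and>
           (\<forall>\<sigma>\<in>R. (\<exists>p q. horizontal_pair p q \<and> \<sigma> = closed_segment p q \<and>
                        p \<in> graph_boundary D f \<and> q \<in> graph_boundary D f)
                    \<and> \<sigma> \<inter> z_axis \<noteq> {})))"

definition K :: "heis set" where
  "K = {(x, 0, z) | x z. -1 \<le> x \<and> x \<le> 1}"

definition S_alpha :: "(real \<Rightarrow> real) \<Rightarrow> heis set" where
  "S_alpha \<alpha> = (\<Union>w. closed_segment (-1, - \<alpha> w, w + \<alpha> w / 2) (1, \<alpha> w, w + \<alpha> w / 2))"

end

theory Submission
  imports Defs
begin

text \<open>The point of the ruling with parameter w above x \<in> [-1,1] is (x, x \<alpha>(w), \<eta>(w)); as a point of
  an intrinsic graph it lies over (x, 0, z) with z = x^2 w + (1 - x^2) \<eta>(w). Hence S_\<alpha> is an intrinsic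
  graph over K only if, for every x \<noteq> 0, this base map w \<mapsto> z is injective (two rulings meeting over
  the same base point would give two values of the graph function), and this forces \<eta> to be
  nondecreasing, which is the slope condition; the points of S_\<alpha> on the z-axis force \<eta> to be onto.
  Conversely, if \<eta> is nondecreasing, continuous and onto, every base map is a continuous surjection,
  strictly increasing for x \<noteq> 0, so f(x, 0, z) = x \<alpha>(w(x, z)) with w(x, z) the inverse of the base map
  is well defined. The inverse depends continuously on (x, z) where x \<noteq> 0 and stays locally bounded
  near x = 0, where the factor x makes f continuous. The rulings end on the boundary lines x = \<plusminus>1
  and cross the z-axis at x = 0.\<close>

lemma closed_segment_ruling_iff:
  "P \<in> closed_segment (-1, -a, e) (1, a, e) \<longleftrightarrow>
     (\<exists>t::real. -1 \<le> t \<and> t \<le> 1 \<and> P = (t, t * a, e :: real))"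
proof
  assume "P \<in> closed_segment (-1, -a, e) (1, a, e)"
  then obtain u where "0 \<le> u" "u \<le> 1" "P = (1 - u) *\<^sub>R (-1, -a, e) + u *\<^sub>R (1, a, e)"
    unfolding closed_segment_def by auto
  then show "\<exists>t. -1 \<le> t \<and> t \<le> 1 \<and> P = (t, t * a, e)"
    by (intro exI[of _ "2 * u - 1"]) (auto simp: algebra_simps)
next
  assume "\<exists>t. -1 \<le> t \<and> t \<le> 1 \<and> P = (t, t * a, e)"
  then obtain t where "-1 \<le> t" "t \<le> 1" "P = (t, t * a, e)" by blast
  then show "P \<in> closed_segment (-1, -a, e) (1, a, e)"
    unfolding closed_segment_def by (intro CollectI exI[of _ "(t + 1) / 2"]) (auto simp: field_simps)
qed

lemma S_alpha_iff:
  "P \<in> S_alpha \<alpha> \<longleftrightarrow> (\<exists>w t. -1 \<le> t \<and> t \<le> 1 \<and> P = (t, t * \<alpha> w, w + \<alpha> w / 2))"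
  unfolding S_alpha_def using closed_segment_ruling_iff by blast

lemma intrinsic_graph_K_iff:
  "P \<in> intrinsic_graph K f \<longleftrightarrow>
     (\<exists>x z. -1 \<le> x \<and> x \<le> 1 \<and> P = (x, f (x, 0, z), z + x * f (x, 0, z) / 2))"
  by (auto simp: intrinsic_graph_def K_def Yt_def)

text \<open>With \<eta> w = w + \<alpha> w / 2, the point of the ruling w above x lies over (x, 0, ruling_base \<eta> x w).\<close>

definition ruling_base :: "(real \<Rightarrow> real) \<Rightarrow> real \<Rightarrow> real \<Rightarrow> real" where
  "ruling_base \<eta> x w = x\<^sup>2 * w + (1 - x\<^sup>2) * \<eta> w"

lemma ruling_point_eq_graph_point:
  "(x, x * \<alpha> w, w + \<alpha> w / 2) = (x, f, z + x * f / 2) \<longleftrightarrow>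
     f = x * \<alpha> w \<and> z = ruling_base (\<lambda>w. w + \<alpha> w / 2) x w"
  by (auto simp: ruling_base_def power2_eq_square field_simps)

lemma graph_value_on_ruling:
  assumes "S_alpha \<alpha> = intrinsic_graph K f" and "-1 \<le> x" "x \<le> 1"
  shows "f (x, 0, ruling_base (\<lambda>w. w + \<alpha> w / 2) x w) = x * \<alpha> w"
proof -
  have "(x, x * \<alpha> w, w + \<alpha> w / 2) \<in> intrinsic_graph K f"
    unfolding assms(1)[symmetric] S_alpha_iff using assms(2,3) by blast
  then obtain z where "(x, x * \<alpha> w, w + \<alpha> w / 2) = (x, f (x, 0, z), z + x * f (x, 0, z) / 2)"
    unfolding intrinsic_graph_K_iff by blast
  then show ?thesis unfolding ruling_point_eq_graph_point by auto
qed

lemma inj_ruling_base_if_graph: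
  assumes "S_alpha \<alpha> = intrinsic_graph K f" and "0 < x" "x \<le> 1"
  shows "inj (ruling_base (\<lambda>w. w + \<alpha> w / 2) x)"
proof
  fix w1 w2
  assume eq: "ruling_base (\<lambda>w. w + \<alpha> w / 2) x w1 = ruling_base (\<lambda>w. w + \<alpha> w / 2) x w2"
  have "-1 \<le> x" using assms(2) by simp
  note on_ruling = graph_value_on_ruling[OF assms(1) this assms(3)]
  have "x * \<alpha> w1 = x * \<alpha> w2"
    using on_ruling[of w1] on_ruling[of w2] eq by metis
  then have "\<alpha> w1 = \<alpha> w2" using assms(2) by simp
  then show "w1 = w2" using eq by (simp add: ruling_base_def algebra_simps)
qed

lemma mono_if_inj_ruling_base:
  fixes \<eta> :: "real \<Rightarrow> real"
  assumes "\<And>x. 0 < x \<Longrightarrow> x < 1 \<Longrightarrow> inj (ruling_base \<eta> x)"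
  shows "mono \<eta>"
proof (rule monoI, rule ccontr)
  fix w1 w2 :: real
  assume "w1 \<le> w2" and "\<not> \<eta> w1 \<le> \<eta> w2"
  then have d: "0 < w2 - w1" and e: "0 < \<eta> w1 - \<eta> w2" by (auto simp: le_less)
  \<comment> \<open>the value of x^2 at which the rulings w1 and w2 pass over the same base point\<close>
  define s where "s = (\<eta> w1 - \<eta> w2) / ((w2 - w1) + (\<eta> w1 - \<eta> w2))"
  have "0 < s" "s < 1" using d e by (auto simp: s_def)
  then have "0 < sqrt s" "sqrt s < 1" by auto
  moreover have "ruling_base \<eta> (sqrt s) w1 = ruling_base \<eta> (sqrt s) w2"
    using d e \<open>0 < s\<close> by (simp add: ruling_base_def s_def field_simps)
  ultimately have "w1 = w2" using assms by (meson injD)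
  then show False using d by simp
qed

lemma surj_eta_if_graph:
  assumes "S_alpha \<alpha> = intrinsic_graph K f"
  shows "surj (\<lambda>w. w + \<alpha> w / 2)"
proof -
  have "z \<in> range (\<lambda>w. w + \<alpha> w / 2)" for z
  proof -
    have "(0, f (0, 0, z), z) \<in> intrinsic_graph K f"
      unfolding intrinsic_graph_K_iff by force
    then show ?thesis unfolding assms[symmetric] S_alpha_iff by auto
  qed
  then show ?thesis by auto
qed

lemma slope_ge_neg2_iff_mono:
  fixes \<alpha> :: "real \<Rightarrow> real"
  shows "(\<forall>w1 w2. w1 < w2 \<longrightarrow> (\<alpha> w2 - \<alpha> w1) / (w2 - w1) \<ge> -2) \<longleftrightarrow> mono (\<lambda>w. w + \<alpha> w / 2)"
proof -
  have "(\<alpha> w2 - \<alpha> w1) / (w2 - w1) \<ge> -2 \<longleftrightarrow> w1 + \<alpha> w1 / 2 \<le> w2 + \<alpha> w2 / 2"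
    if "w1 < w2" for w1 w2
    using that by (simp add: pos_le_divide_eq) linarith
  then show ?thesis
    unfolding mono_def by (metis eq_iff le_less)
qed

lemma ruling_base_increment_ge:
  fixes \<eta> :: "real \<Rightarrow> real"
  assumes "mono \<eta>" "x\<^sup>2 \<le> 1" "w1 \<le> w2"
  shows "x\<^sup>2 * (w2 - w1) \<le> ruling_base \<eta> x w2 - ruling_base \<eta> x w1"
proof -
  have "0 \<le> (1 - x\<^sup>2) * (\<eta> w2 - \<eta> w1)"
    using assms by (simp add: monoD)
  then show ?thesis by (simp add: ruling_base_def algebra_simps)
qed

lemma mono_ruling_base: "mono \<eta> \<Longrightarrow> x\<^sup>2 \<le> 1 \<Longrightarrow> mono (ruling_base \<eta> x)"
  using ruling_base_increment_ge[of \<eta> x] by (intro monoI) (smt (verit) zero_le_power2 mult_nonneg_nonneg)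

lemma strict_mono_ruling_base:
  "mono \<eta> \<Longrightarrow> x\<^sup>2 \<le> 1 \<Longrightarrow> x \<noteq> 0 \<Longrightarrow> strict_mono (ruling_base \<eta> x)"
  using ruling_base_increment_ge[of \<eta> x]
  by (intro strict_monoI) (smt (verit) zero_less_power2 mult_pos_pos)

lemma surj_ruling_base:
  fixes \<eta> :: "real \<Rightarrow> real"
  assumes "continuous_on UNIV \<eta>" "mono \<eta>" "surj \<eta>" "x\<^sup>2 \<le> 1"
  shows "surj (ruling_base \<eta> x)"
proof -
  have "z \<in> range (ruling_base \<eta> x)" for z
  proof -
    obtain a where a: "\<eta> a = z" using \<open>surj \<eta>\<close> by (metis surjD)
    have at_a: "ruling_base \<eta> x a - z = x\<^sup>2 * (a - z)"
      using a by (simp add: ruling_base_def algebra_simps)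
    have at_z: "ruling_base \<eta> x z - z = (1 - x\<^sup>2) * (\<eta> z - \<eta> a)"
      using a by (simp add: ruling_base_def algebra_simps)
    have "z \<in> closed_segment (ruling_base \<eta> x a) (ruling_base \<eta> x z)"
    proof (cases "a \<le> z")
      case True
      then have "x\<^sup>2 * (a - z) \<le> 0" "0 \<le> (1 - x\<^sup>2) * (\<eta> z - \<eta> a)"
        using assms(2,4) by (auto simp: mult_nonneg_nonpos monoD)
      then show ?thesis using at_a at_z by (simp add: closed_segment_eq_real_ivl)
    next
      case False
      then have "0 \<le> x\<^sup>2 * (a - z)" "(1 - x\<^sup>2) * (\<eta> z - \<eta> a) \<le> 0"
        using assms(2,4) by (auto simp: mult_nonneg_nonpos monoD)
      then show ?thesis using at_a at_z by (auto simp: closed_segment_eq_real_ivl)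
    qed
    moreover have "continuous_on (closed_segment a z) (ruling_base \<eta> x)"
      unfolding ruling_base_def[abs_def]
      by (intro continuous_intros continuous_on_subset[OF assms(1)]) auto
    ultimately show ?thesis using IVT'_closed_segment_real by blast
  qed
  then show ?thesis by blast
qed

lemma eventually_inv_between:
  fixes g :: "'a::t2_space \<Rightarrow> real \<Rightarrow> real"
  assumes mono: "\<And>x z. (x, z) \<in> S \<Longrightarrow> mono (g x)"
    and surj: "\<And>x z. (x, z) \<in> S \<Longrightarrow> surj (g x)"
    and cont: "\<And>w. isCont (\<lambda>x. g x w) x0"
    and "g x0 a < z0" "z0 < g x0 b"
  shows "\<forall>\<^sub>F p in at (x0, z0) within S. a < inv (g (fst p)) (snd p) \<and> inv (g (fst p)) (snd p) < b"
proof -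
  have "(fst \<longlongrightarrow> x0) (at (x0, z0) within S)" "(snd \<longlongrightarrow> z0) (at (x0, z0) within S)"
    using tendsto_fst[OF tendsto_ident_at] tendsto_snd[OF tendsto_ident_at] by auto
  then have lim: "((\<lambda>p. g (fst p) w - snd p) \<longlongrightarrow> g x0 w - z0) (at (x0, z0) within S)" for w
    by (intro tendsto_intros isCont_tendsto_compose[OF cont])
  have "\<forall>\<^sub>F p in at (x0, z0) within S. g (fst p) a - snd p < 0"
    using assms(4) by (intro order_tendstoD(2)[OF lim]) simp
  moreover have "\<forall>\<^sub>F p in at (x0, z0) within S. g (fst p) b - snd p > 0"
    using assms(5) by (intro order_tendstoD(1)[OF lim]) simp
  moreover have "\<forall>\<^sub>F p in at (x0, z0) within S. p \<in> S"
    by (simp add: eventually_at_filter)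
  ultimately show ?thesis
  proof eventually_elim
    case (elim p)
    then have "g (fst p) a < g (fst p) (inv (g (fst p)) (snd p))"
      and "g (fst p) (inv (g (fst p)) (snd p)) < g (fst p) b"
      using surj[of "fst p" "snd p"] by (simp_all add: surj_f_inv_f)
    then show ?case
      using mono[of "fst p" "snd p"] elim by (auto elim: mono_strict_invE)
  qed
qed

lemma tendsto_inv_at:
  fixes g :: "'a::t2_space \<Rightarrow> real \<Rightarrow> real"
  assumes mono: "\<And>x z. (x, z) \<in> S \<Longrightarrow> mono (g x)"
    and surj: "\<And>x z. (x, z) \<in> S \<Longrightarrow> surj (g x)"
    and cont: "\<And>w. isCont (\<lambda>x. g x w) x0"
    and "(x0, z0) \<in> S" "strict_mono (g x0)"
  shows "((\<lambda>p. inv (g (fst p)) (snd p)) \<longlongrightarrow> inv (g x0) z0) (at (x0, z0) within S)"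
proof (rule order_tendstoI)
  let ?w0 = "inv (g x0) z0"
  have z0: "g x0 ?w0 = z0"
    using surj[OF assms(4)] by (simp add: surj_f_inv_f)
  have below: "g x0 (?w0 - 1) < z0" and above: "z0 < g x0 (?w0 + 1)"
    using strict_monoD[OF assms(5), of "?w0 - 1" ?w0] strict_monoD[OF assms(5), of ?w0 "?w0 + 1"] z0
    by simp_all
  show "\<forall>\<^sub>F p in at (x0, z0) within S. a < inv (g (fst p)) (snd p)" if "a < ?w0" for a
  proof -
    have "g x0 a < z0" using strict_monoD[OF assms(5) that] z0 by simp
    then show ?thesis
      using eventually_inv_between[OF mono surj cont _ above] by (simp add: eventually_conj_iff)
  qed
  show "\<forall>\<^sub>F p in at (x0, z0) within S. inv (g (fst p)) (snd p) < b" if "?w0 < b" for b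
  proof -
    have "z0 < g x0 b" using strict_monoD[OF assms(5) that] z0 by simp
    then show ?thesis
      using eventually_inv_between[OF mono surj cont below] by (simp add: eventually_conj_iff)
  qed
qed

lemma eventually_inv_bounded:
  fixes g :: "'a::t2_space \<Rightarrow> real \<Rightarrow> real"
  assumes mono: "\<And>x z. (x, z) \<in> S \<Longrightarrow> mono (g x)"
    and surj: "\<And>x z. (x, z) \<in> S \<Longrightarrow> surj (g x)"
    and cont: "\<And>w. isCont (\<lambda>x. g x w) x0"
    and "(x0, z0) \<in> S"
  shows "\<exists>a b. \<forall>\<^sub>F p in at (x0, z0) within S. inv (g (fst p)) (snd p) \<in> {a..b}"
proof -
  obtain a b where "g x0 a = z0 - 1" "g x0 b = z0 + 1"
    using surj[OF assms(4)] by (metis surjD)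
  then have "\<forall>\<^sub>F p in at (x0, z0) within S. a < inv (g (fst p)) (snd p) \<and> inv (g (fst p)) (snd p) < b"
    by (intro eventually_inv_between[OF mono surj cont]) simp_all
  then have "\<forall>\<^sub>F p in at (x0, z0) within S. inv (g (fst p)) (snd p) \<in> {a..b}"
    by (rule eventually_mono) auto
  then show ?thesis by blast
qed

lemma continuous_on_ruling_slope:
  fixes \<alpha> \<eta> :: "real \<Rightarrow> real"
  assumes \<alpha>: "continuous_on UNIV \<alpha>"
    and \<eta>: "continuous_on UNIV \<eta>" "mono \<eta>" "surj \<eta>"
  shows "continuous_on ({-1..1} \<times> UNIV) (\<lambda>p. fst p * \<alpha> (inv (ruling_base \<eta> (fst p)) (snd p)))"
    (is "continuous_on ?S ?F")
proof -
  have sq: "x\<^sup>2 \<le> 1" if "(x, z) \<in> ?S" for x z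
    using that by (simp add: abs_le_iff abs_square_le_1)
  have mono: "mono (ruling_base \<eta> x)" if "(x, z) \<in> ?S" for x z
    using mono_ruling_base[OF \<eta>(2) sq[OF that]] .
  have surj: "surj (ruling_base \<eta> x)" if "(x, z) \<in> ?S" for x z
    using surj_ruling_base[OF \<eta> sq[OF that]] .
  have cont: "isCont (\<lambda>x. ruling_base \<eta> x w) x0" for w x0
    unfolding ruling_base_def by (intro continuous_intros)
  have fst_lim: "(fst \<longlongrightarrow> x0) (at (x0, z0) within ?S)" for x0 z0
    using tendsto_fst[OF tendsto_ident_at] by auto
  show ?thesis
    unfolding continuous_on_def
  proof
    fix p0 assume "p0 \<in> ?S"
    then obtain x0 z0 where p0: "p0 = (x0, z0)" "(x0, z0) \<in> ?S" by (cases p0) auto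
    show "(?F \<longlongrightarrow> ?F p0) (at p0 within ?S)"
    proof (cases "x0 = 0")
      case False
      have "((\<lambda>p. inv (ruling_base \<eta> (fst p)) (snd p)) \<longlongrightarrow> inv (ruling_base \<eta> x0) z0)
          (at (x0, z0) within ?S)"
        by (rule tendsto_inv_at[where g = "ruling_base \<eta>"])
          (use mono surj cont p0(2) strict_mono_ruling_base[OF \<eta>(2) sq[OF p0(2)] False] in auto)
      moreover have "isCont \<alpha> (inv (ruling_base \<eta> x0) z0)"
        using \<alpha> by (simp add: continuous_on_eq_continuous_at)
      ultimately have "((\<lambda>p. \<alpha> (inv (ruling_base \<eta> (fst p)) (snd p)))
          \<longlongrightarrow> \<alpha> (inv (ruling_base \<eta> x0) z0)) (at (x0, z0) within ?S)"
        using isCont_tendsto_compose by blast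
      then show ?thesis
        using tendsto_mult[OF fst_lim] p0 by simp
    next
      case True
      have "\<exists>a b. \<forall>\<^sub>F p in at (x0, z0) within ?S. inv (ruling_base \<eta> (fst p)) (snd p) \<in> {a..b}"
        by (rule eventually_inv_bounded[where g = "ruling_base \<eta>"]) (use mono surj cont p0(2) in auto)
      then obtain a b where between: "\<forall>\<^sub>F p in at (x0, z0) within ?S.
          inv (ruling_base \<eta> (fst p)) (snd p) \<in> {a..b}"
        by blast
      obtain B where B: "\<forall>w\<in>{a..b}. \<bar>\<alpha> w\<bar> \<le> B"
        using compact_imp_bounded[OF compact_continuous_image[OF continuous_on_subset[OF \<alpha>] compact_Icc[of a b]]]
        unfolding bounded_iff by auto
      have "\<forall>\<^sub>F p in at (x0, z0) within ?S. norm (?F p) \<le> \<bar>fst p\<bar> * B"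
        using between by eventually_elim (use B in \<open>auto simp: abs_mult intro: mult_left_mono\<close>)
      moreover have "((\<lambda>p. \<bar>fst p\<bar> * B) \<longlongrightarrow> 0) (at (x0, z0) within ?S)"
        using tendsto_mult_right[OF tendsto_rabs[OF fst_lim[of x0 z0]], of B] True by simp
      ultimately have "(?F \<longlongrightarrow> 0) (at (x0, z0) within ?S)"
        by (rule Lim_null_comparison)
      then show ?thesis using True p0 by simp
    qed
  qed
qed

lemma frontier_of_K:
  assumes "\<bar>x\<bar> = 1"
  shows "(x, 0, z) \<in> subtopology euclidean V0 frontier_of K"
proof -
  have V0: "(x, 0, z) \<in> V0" by (simp add: V0_def)
  have "(x, 0, z) \<in> K" using assms by (auto simp: K_def)
  moreover have "K \<subseteq> V0" by (auto simp: K_def V0_def)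
  ultimately have "(x, 0, z) \<in> closure (V0 \<inter> K)"
    using closure_subset by blast
  moreover have "(x, 0, z) \<in> closure (V0 - K)"
    unfolding closure_approachable
  proof (intro allI impI)
    fix e :: real assume "0 < e"
    have "x = 1 \<or> x = -1" using assms by auto
    then have "((1 + e / 2) * x, 0, z) \<in> V0 - K" and "dist ((1 + e / 2) * x, 0, z) (x, 0, z) = e / 2"
      using \<open>0 < e\<close> by (auto simp: V0_def K_def dist_Pair_Pair dist_real_def)
    moreover have "e / 2 < e" using \<open>0 < e\<close> by simp
    ultimately show "\<exists>y\<in>V0 - K. dist y (x, 0, z) < e"
      by (metis bexI)
  qed
  ultimately show ?thesis
    using V0 by (simp add: frontier_of_closures closure_of_subtopology Diff_eq Int_left_commute)
qed

text \<open>At x = 0 the inverse of the base map is an arbitrary choice, since \<eta> need not be injective;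
  the factor x makes the value 0 regardless.\<close>

definition strip_fn :: "(real \<Rightarrow> real) \<Rightarrow> heis \<Rightarrow> real" where
  "strip_fn \<alpha> u = fst u * \<alpha> (inv (ruling_base (\<lambda>w. w + \<alpha> w / 2) (fst u)) (snd (snd u)))"

context
  fixes \<alpha> :: "real \<Rightarrow> real"
  assumes cont: "continuous_on UNIV \<alpha>"
    and mono: "mono (\<lambda>w. w + \<alpha> w / 2)"
    and surj: "surj (\<lambda>w. w + \<alpha> w / 2)"
begin

lemma continuous_on_eta: "continuous_on UNIV (\<lambda>w. w + \<alpha> w / 2)"
  using cont by (intro continuous_intros) auto

lemma continuous_on_strip_fn: "continuous_on K (strip_fn \<alpha>)"
proof -
  have "continuous_on ({-1..1} \<times> UNIV)
      (\<lambda>p. fst p * \<alpha> (inv (ruling_base (\<lambda>w. w + \<alpha> w / 2) (fst p)) (snd p)))"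
    by (rule continuous_on_ruling_slope[OF cont continuous_on_eta mono surj])
  moreover have "continuous_on K (\<lambda>u. (fst u, snd (snd u)))"
    by (intro continuous_intros)
  moreover have "(\<lambda>u. (fst u, snd (snd u))) ` K \<subseteq> {-1..1} \<times> UNIV"
    by (auto simp: K_def)
  ultimately have "continuous_on K (\<lambda>u. (\<lambda>p. fst p * \<alpha> (inv (ruling_base (\<lambda>w. w + \<alpha> w / 2) (fst p)) (snd p)))
      (fst u, snd (snd u)))"
    by (rule continuous_on_compose2)
  then show ?thesis by (simp add: strip_fn_def[abs_def])
qed

lemma strip_fn_on_ruling:
  assumes "x\<^sup>2 \<le> 1"
  shows "strip_fn \<alpha> (x, 0, ruling_base (\<lambda>w. w + \<alpha> w / 2) x w) = x * \<alpha> w"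
proof (cases "x = 0")
  case False
  then have "inj (ruling_base (\<lambda>w. w + \<alpha> w / 2) x)"
    using strict_mono_ruling_base[OF mono assms] strict_mono_imp_inj_on by blast
  then show ?thesis by (simp add: strip_fn_def)
qed (simp add: strip_fn_def)

lemma S_alpha_eq_graph_strip_fn: "S_alpha \<alpha> = intrinsic_graph K (strip_fn \<alpha>)"
proof (intro set_eqI iffI)
  fix P assume "P \<in> S_alpha \<alpha>"
  then obtain w x where x: "-1 \<le> x" "x \<le> 1" and P: "P = (x, x * \<alpha> w, w + \<alpha> w / 2)"
    unfolding S_alpha_iff by blast
  let ?z = "ruling_base (\<lambda>w. w + \<alpha> w / 2) x w"
  have "x\<^sup>2 \<le> 1" using x by (simp add: abs_square_le_1)
  then have "P = (x, strip_fn \<alpha> (x, 0, ?z), ?z + x * strip_fn \<alpha> (x, 0, ?z) / 2)"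
    unfolding P ruling_point_eq_graph_point by (simp add: strip_fn_on_ruling)
  then show "P \<in> intrinsic_graph K (strip_fn \<alpha>)"
    unfolding intrinsic_graph_K_iff using x by blast
next
  fix P assume "P \<in> intrinsic_graph K (strip_fn \<alpha>)"
  then obtain x z where x: "-1 \<le> x" "x \<le> 1"
    and P: "P = (x, strip_fn \<alpha> (x, 0, z), z + x * strip_fn \<alpha> (x, 0, z) / 2)"
    unfolding intrinsic_graph_K_iff by blast
  define w where "w = inv (ruling_base (\<lambda>w. w + \<alpha> w / 2) x) z"
  have "x\<^sup>2 \<le> 1" using x by (simp add: abs_square_le_1)
  then have "z = ruling_base (\<lambda>w. w + \<alpha> w / 2) x w"
    unfolding w_def using surj_ruling_base[OF continuous_on_eta mono surj] by (simp add: surj_f_inv_f)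
  moreover have "strip_fn \<alpha> (x, 0, z) = x * \<alpha> w"
    by (simp add: strip_fn_def w_def)
  ultimately have "P = (x, x * \<alpha> w, w + \<alpha> w / 2)"
    unfolding P using ruling_point_eq_graph_point by metis
  then show "P \<in> S_alpha \<alpha>"
    unfolding S_alpha_iff using x by blast
qed

lemma ruling_endpoint_in_graph_boundary:
  assumes "\<bar>x\<bar> = 1"
  shows "(x, x * \<alpha> w, w + \<alpha> w / 2) \<in> graph_boundary K (strip_fn \<alpha>)"
proof -
  have "x\<^sup>2 = 1" using assms by (simp add: abs_square_eq_1)
  then have base: "ruling_base (\<lambda>w. w + \<alpha> w / 2) x w = w"
    by (simp add: ruling_base_def)
  then have "strip_fn \<alpha> (x, 0, w) = x * \<alpha> w"
    using strip_fn_on_ruling[of x w] \<open>x\<^sup>2 = 1\<close> by simp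
  then have "(x, x * \<alpha> w, w + \<alpha> w / 2) = hmul (x, 0, w) (Yt (strip_fn \<alpha> (x, 0, w)))"
    using ruling_point_eq_graph_point[of x \<alpha> w _ w] base \<open>x\<^sup>2 = 1\<close> by (simp add: Yt_def power2_eq_square)
  then show ?thesis
    unfolding graph_boundary_def intrinsic_graph_def using frontier_of_K[OF assms] by blast
qed

lemma graphical_strip_S_alpha: "graphical_strip K (S_alpha \<alpha>)"
proof -
  define R where "R = range (\<lambda>w. closed_segment (-1 :: real, - \<alpha> w, w + \<alpha> w / 2) (1, \<alpha> w, w + \<alpha> w / 2))"
  have "\<Union>R = S_alpha \<alpha>" by (simp add: R_def S_alpha_def)
  moreover have "(\<exists>p q. horizontal_pair p q \<and> \<sigma> = closed_segment p q \<and>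
      p \<in> graph_boundary K (strip_fn \<alpha>) \<and> q \<in> graph_boundary K (strip_fn \<alpha>)) \<and> \<sigma> \<inter> z_axis \<noteq> {}"
    if "\<sigma> \<in> R" for \<sigma>
  proof -
    obtain w where \<sigma>: "\<sigma> = closed_segment (-1, - \<alpha> w, w + \<alpha> w / 2) (1, \<alpha> w, w + \<alpha> w / 2)"
      using \<open>\<sigma> \<in> R\<close> by (auto simp: R_def)
    have "horizontal_pair (-1, - \<alpha> w, w + \<alpha> w / 2) (1, \<alpha> w, w + \<alpha> w / 2)"
      unfolding horizontal_pair_def by (intro exI[of _ 2] exI[of _ "2 * \<alpha> w"]) simp
    moreover have "(-1, - \<alpha> w, w + \<alpha> w / 2) \<in> graph_boundary K (strip_fn \<alpha>)"
      using ruling_endpoint_in_graph_boundary[of "-1" w] by simp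
    moreover have "(1, \<alpha> w, w + \<alpha> w / 2) \<in> graph_boundary K (strip_fn \<alpha>)"
      using ruling_endpoint_in_graph_boundary[of 1 w] by simp
    moreover have "(0, 0, w + \<alpha> w / 2) \<in> \<sigma>"
      unfolding \<sigma> closed_segment_ruling_iff by force
    moreover have "(0, 0, w + \<alpha> w / 2) \<in> z_axis"
      by (simp add: z_axis_def)
    ultimately show ?thesis using \<sigma> by blast
  qed
  moreover have "K \<subseteq> V0" by (auto simp: K_def V0_def)
  ultimately show ?thesis
    unfolding graphical_strip_def using continuous_on_strip_fn S_alpha_eq_graph_strip_fn by blast
qed

end

theorem lemma3p1:
  fixes \<alpha> :: "real \<Rightarrow> real"
  assumes "continuous_on UNIV \<alpha>"
  defines "\<eta> \<equiv> (\<lambda>w. w + \<alpha> w / 2)"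
  shows "graphical_strip K (S_alpha \<alpha>) \<longleftrightarrow>
           ((\<forall>w1 w2. w1 < w2 \<longrightarrow> (\<alpha> w2 - \<alpha> w1) / (w2 - w1) \<ge> -2) \<and> range \<eta> = UNIV)"
  unfolding slope_ge_neg2_iff_mono \<eta>_def
proof
  assume "graphical_strip K (S_alpha \<alpha>)"
  then obtain f where f: "S_alpha \<alpha> = intrinsic_graph K f"
    unfolding graphical_strip_def by blast
  have "mono (\<lambda>w. w + \<alpha> w / 2)"
    by (rule mono_if_inj_ruling_base) (simp add: inj_ruling_base_if_graph[OF f])
  with surj_eta_if_graph[OF f] show "mono (\<lambda>w. w + \<alpha> w / 2) \<and> surj (\<lambda>w. w + \<alpha> w / 2)"
    by blast
next
  assume "mono (\<lambda>w. w + \<alpha> w / 2) \<and> surj (\<lambda>w. w + \<alpha> w / 2)"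
  then show "graphical_strip K (S_alpha \<alpha>)"
    using graphical_strip_S_alpha[OF assms(1)] by blast
qed

end
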